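(* Let $r$ be a prime power, $q=r^2$, and let $0\le k\le n\le q$ be integers. Then for every integer $i$ with $0\le i\le n-k$ there exists a Hermitian self-orthogonal matrix-product code over $\mathbb{F}_q$ with parameters $[2n,n-i,d]_q$ where $d\ge\min\{2(n-k+1),k+i+1\}$.
   Context: For $a\in\mathbb{F}_q$, $\overline{a}:=a^r$. The Hermitian inner product on $\mathbb{F}_q^n$ is $\langle u,v\rangle_H=\sum_i u_i\overline{v_i}$; a linear code $C$ is Hermitian self-orthogonal if $C\subseteq C^{\perp_H}$. A code with parameters $[n,k,d]_q$ has length $n$, dimension $k$, minimum Hamming weight $d$. If $C_1,\dots,C_s$ are linear codes of length $m$ with generator matrices $G_i$ and $A=[a_{ij}]\in M_{s,l}(\mathbb{F}_q)$, the matrix-product code $[C_1,\dots,C_s]\cdot A$ is the linear code of length $ml$ generated by the block matrix whose $(i,j)$ block is $a_{ij}G_i$. *)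

theory Defs
  imports Main "HOL-Computational_Algebra.Primes" "HOL.Vector_Spaces" "HOL-Library.Function_Algebras"
begin

text \<open>Vectors of length n over a field are modelled as functions nat => 'a
  that vanish from index n onward.  Scalar multiplication is pointwise.\<close>

definition fscale :: "'a::field \<Rightarrow> (nat \<Rightarrow> 'a) \<Rightarrow> (nat \<Rightarrow> 'a)" where
  "fscale c v = (\<lambda>i. c * v i)"

interpretation fvs: vector_space "fscale :: 'a::field \<Rightarrow> (nat \<Rightarrow> 'a) \<Rightarrow> (nat \<Rightarrow> 'a)"
  by unfold_locales (auto simp: fscale_def fun_eq_iff algebra_simps)

definition vecs :: "nat \<Rightarrow> (nat \<Rightarrow> 'a::zero) set" where
  "vecs n = {v. \<forall>i\<ge>n. v i = 0}"

definition linear_code :: "nat \<Rightarrow> (nat \<Rightarrow> 'a::field) set \<Rightarrow> bool" where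
  "linear_code n C \<longleftrightarrow> C \<subseteq> vecs n \<and> fvs.subspace C"

definition code_dim :: "(nat \<Rightarrow> 'a::field) set \<Rightarrow> nat" where
  "code_dim C = fvs.dim C"

definition hamming_weight :: "nat \<Rightarrow> (nat \<Rightarrow> 'a::zero) \<Rightarrow> nat" where
  "hamming_weight n v = card {i. i < n \<and> v i \<noteq> 0}"

text \<open>Hermitian inner product on 'a^n with conjugation a |-> a^r.\<close>
definition herm_inner :: "nat \<Rightarrow> nat \<Rightarrow> (nat \<Rightarrow> 'a::field) \<Rightarrow> (nat \<Rightarrow> 'a) \<Rightarrow> 'a" where
  "herm_inner r n u v = (\<Sum>i<n. u i * (v i) ^ r)"

definition herm_self_orth :: "nat \<Rightarrow> nat \<Rightarrow> (nat \<Rightarrow> 'a::field) set \<Rightarrow> bool" where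
  "herm_self_orth r n C \<longleftrightarrow> (\<forall>u\<in>C. \<forall>v\<in>C. herm_inner r n u v = 0)"

text \<open>Matrix-product code [C_0,...,C_{s-1}] * A, with A an s x l matrix (A i j),
  codes of length m.  This is the row space of the block matrix with blocks A i j * G_i.\<close>
definition mp_code :: "nat \<Rightarrow> nat \<Rightarrow> nat \<Rightarrow> (nat \<Rightarrow> (nat \<Rightarrow> 'a::field) set)
     \<Rightarrow> (nat \<Rightarrow> nat \<Rightarrow> 'a) \<Rightarrow> (nat \<Rightarrow> 'a) set" where
  "mp_code s l m C A =
     {w. \<exists>c. (\<forall>i<s. c i \<in> C i) \<and>
          w = (\<lambda>x. if x < l * m then (\<Sum>i<s. A i (x div m) * c i (x mod m)) else 0)}"

end

theory Submission
  imports Defs "HOL-Library.Cardinality" "HOL-Number_Theory.Residues" "HOL-Computational_Algebra.Polynomial"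
begin

(* Fix n distinct evaluation points P 0, ..., P (n - 1) in F_q and let Z be the product of
   X - y over the remaining elements y of F_q.  Let C0 be the Reed-Solomon code of evaluations
   of the polynomials f of degree < k, and C1 the code of conjugated evaluations of g * Z with
   degree g < t = n - k - i.  Then f * g * Z vanishes off the evaluation points and has degree
   at most q - 2, so the Hermitian product of a word of C0 with a word of C1 is the sum of
   f * g * Z over all of F_q, which is 0.

   The norm x ^ (r + 1) maps the nonzero elements of F_q onto the roots of y ^ (r - 1) = 1,
   among them -1, with fibres of size r + 1; so there are a /= b with
   a ^ (r + 1) = b ^ (r + 1) = -1.  In the matrix-product code [C0, C1] * [[1, a], [1, b]],
   whose words are (u + v | a u + b v), the Hermitian products <u, u'> and <v, v'> then occur
   with the factors 1 + a ^ (r + 1) = 0 and 1 + b ^ (r + 1) = 0, and the mixed ones vanish by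
   the orthogonality of C0 and C1.  The code has dimension k + t = n - i, and since a /= b a
   nonzero word has weight at least 2 (n - k + 1) if v = 0 (twice the weight of u) and at
   least n - t + 1 = k + i + 1 otherwise (at least the weight of v). *)

lemma power_card_minus_one_eq_1:
  fixes x :: "'a::{finite,field}"
  assumes "x \<noteq> 0"
  shows "x ^ (CARD('a) - 1) = 1"
proof -
  have "(\<Prod>y\<in>-{0}. x * y) = (\<Prod>y\<in>-{0::'a}. y)"
    by (rule prod.reindex_bij_witness[of _ "\<lambda>y. y / x" "\<lambda>y. x * y"]) (use assms in auto)
  moreover have "(\<Prod>y\<in>-{0}. x * y) = x ^ (CARD('a) - 1) * (\<Prod>y\<in>-{0::'a}. y)"
    by (simp add: prod.distrib Compl_eq_Diff_UNIV card_Diff_singleton)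
  moreover have "(\<Prod>y\<in>-{0::'a}. y) \<noteq> 0"
    by simp
  ultimately show ?thesis
    by simp
qed

lemma power_card_eq_self:
  fixes x :: "'a::{finite,field}"
  shows "x ^ CARD('a) = x"
proof (cases "x = 0")
  case False
  have "x ^ CARD('a) = x * x ^ (CARD('a) - 1)"
    by (metis finite_UNIV_card_ge_0 finite power_eq_if zero_less_iff_neq_zero)
  with power_card_minus_one_eq_1[OF False] show ?thesis
    by simp
qed (simp add: finite_UNIV_card_ge_0)

lemma card_roots_power_le:
  fixes c :: "'a::idom"
  assumes "j \<ge> 1"
  shows "card {x. x ^ j = c} \<le> j"
proof -
  let ?p = "monom 1 j - [:c:]"
  have "coeff ?p j = 1"
    using assms by (cases j) simp_all
  then have "?p \<noteq> 0"
    by (metis coeff_0 zero_neq_one)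
  moreover have "{x. x ^ j = c} = {x. poly ?p x = 0}"
    by (simp add: poly_monom)
  ultimately have "card {x. x ^ j = c} \<le> degree ?p"
    using card_poly_roots_bound by metis
  also have "degree ?p \<le> j"
    by (simp add: degree_diff_le degree_monom_eq)
  finally show ?thesis .
qed

lemma sum_UNIV_power_eq_0:
  assumes "j + 1 < CARD('a::{finite,field})"
  shows "(\<Sum>x\<in>UNIV. x ^ j :: 'a) = 0"
proof (cases "j = 0")
  case True
  then show ?thesis
    using CHAR_dvd_CARD[where 'a='a] of_nat_eq_0_iff_char_dvd by auto
next
  case False
  have "card ({x::'a. x ^ j = 1} \<union> {0}) \<le> j + 1"
    using card_roots_power_le[of j "1::'a"] card_Un_le[of "{x::'a. x ^ j = 1}" "{0}"] False by simp
  then have "{x::'a. x ^ j = 1} \<union> {0} \<noteq> UNIV"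
    using assms by auto
  then obtain c :: 'a where "c \<noteq> 0" "c ^ j \<noteq> 1"
    by auto
  have "(\<Sum>x\<in>UNIV. x ^ j) = (\<Sum>x\<in>UNIV. (c * x) ^ j :: 'a)"
    by (rule sum.reindex_bij_witness[of _ "\<lambda>y. c * y" "\<lambda>y. y / c"]) (use \<open>c \<noteq> 0\<close> in auto)
  also have "\<dots> = c ^ j * (\<Sum>x\<in>UNIV. x ^ j)"
    by (simp add: power_mult_distrib sum_distrib_left)
  finally show ?thesis
    using \<open>c ^ j \<noteq> 1\<close> by (metis mult_cancel_right2)
qed

lemma sum_UNIV_poly_eq_0:
  fixes h :: "'a::{finite,field} poly"
  assumes "degree h + 2 \<le> CARD('a)"
  shows "(\<Sum>x\<in>UNIV. poly h x) = 0"
proof -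
  have "(\<Sum>x\<in>UNIV. poly h x) = (\<Sum>i\<le>degree h. coeff h i * (\<Sum>x\<in>UNIV. x ^ i))"
    by (simp add: poly_altdef sum_distrib_left sum.swap[of _ UNIV])
  also have "\<dots> = 0"
    using assms by (intro sum.neutral ballI) (simp add: sum_UNIV_power_eq_0)
  finally show ?thesis .
qed

lemma prime_CHAR_finite_field: "prime CHAR('a::{finite,field})"
  by (simp add: finite_imp_CHAR_pos prime_CHAR_semidom)

lemma CHAR_eq_prime_of_card:
  assumes "prime p" "CARD('a::{finite,field}) = p ^ e"
  shows "CHAR('a) = p"
proof -
  have "CHAR('a) dvd p ^ e"
    using CHAR_dvd_CARD[where 'a='a] assms(2) by simp
  then have "CHAR('a) dvd p"
    by (rule prime_dvd_power[OF prime_CHAR_finite_field])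
  then show ?thesis
    by (rule primes_dvd_imp_eq[OF prime_CHAR_finite_field assms(1)])
qed

lemma minus_one_power_pred_eq_1:
  assumes "r = CHAR('a::{finite,field}) ^ e"
  shows "(-1::'a) ^ (r - 1) = 1"
proof (cases "CHAR('a) = 2")
  case True
  then have "-1 = (1::'a)"
    by (rule uminus_CHAR_2)
  then show ?thesis
    by (metis power_one)
next
  case False
  then have "2 < CHAR('a)"
    using prime_ge_2_nat[OF prime_CHAR_finite_field[where 'a='a]] by linarith
  then have "odd r"
    using assms prime_odd_nat[OF prime_CHAR_finite_field[where 'a='a]] by simp
  then show ?thesis
    by (simp add: odd_pos)
qed

lemma two_le_card_field: "2 \<le> CARD('a::{finite,field})"
proof -
  have "card {0, 1::'a} \<le> CARD('a)"
    by (rule card_mono) simp_all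
  then show ?thesis
    by simp
qed

lemma norm_image_eq:
  assumes card: "CARD('a::{finite,field}) = r ^ 2" and "r \<ge> 2"
  shows "(\<lambda>x::'a. x ^ (r + 1)) ` (-{0}) = {y. y ^ (r - 1) = 1}"
proof -
  let ?N = "\<lambda>x::'a. x ^ (r + 1)" and ?S = "{y::'a. y ^ (r - 1) = 1}"
  have pred_card: "(r + 1) * (r - 1) = CARD('a) - 1"
    using card by (simp add: power2_eq_square algebra_simps diff_mult_distrib2)
  have image_sub: "?N ` (-{0}) \<subseteq> ?S"
  proof
    fix y assume "y \<in> ?N ` (-{0})"
    then obtain x where "x \<noteq> 0" "y = x ^ (r + 1)"
      by auto
    then have "y ^ (r - 1) = x ^ (CARD('a) - 1)"
      by (simp only: power_mult[symmetric] pred_card)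
    then show "y \<in> ?S"
      using power_card_minus_one_eq_1[OF \<open>x \<noteq> 0\<close>] by simp
  qed
  have card_S: "card ?S \<le> r - 1"
    using \<open>r \<ge> 2\<close> by (intro card_roots_power_le) simp
  have "(r - 1) * (r + 1) = card (-{0::'a})"
    using pred_card by (simp add: Compl_eq_Diff_UNIV card_Diff_singleton mult.commute)
  also have "\<dots> \<le> card (\<Union>y\<in>?N ` (-{0}). {x. x ^ (r + 1) = y})"
    by (rule card_mono) auto
  also have "\<dots> \<le> (\<Sum>y\<in>?N ` (-{0}). card {x. x ^ (r + 1) = y})"
    by (rule card_UN_le) simp
  also have "\<dots> \<le> (\<Sum>y\<in>?N ` (-{0}). r + 1)"
    by (intro sum_mono card_roots_power_le) simp
  also have "\<dots> = card (?N ` (-{0})) * (r + 1)"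
    by simp
  finally have "r - 1 \<le> card (?N ` (-{0}))"
    by (subst (asm) mult_le_cancel2) simp
  then show ?thesis
    using card_seteq[OF _ image_sub] card_S by simp
qed

lemma exists_nontrivial_norm_eq_1:
  assumes card: "CARD('a::{finite,field}) = r ^ 2" and "r \<ge> 2"
  shows "\<exists>z::'a. z \<noteq> 1 \<and> z ^ (r + 1) = 1"
proof -
  let ?N = "\<lambda>x::'a. x ^ (r + 1)"
  have "r < r * r"
    using mult_strict_left_mono[of 1 r r] \<open>r \<ge> 2\<close> by simp
  moreover have "card (-{0::'a}) = r * r - 1"
    using card by (simp add: Compl_eq_Diff_UNIV card_Diff_singleton power2_eq_square)
  moreover have "card (?N ` (-{0})) \<le> r - 1"
    unfolding norm_image_eq[OF assms] using \<open>r \<ge> 2\<close> by (intro card_roots_power_le) simp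
  ultimately have "card (?N ` (-{0})) < card (-{0::'a})"
    using \<open>r \<ge> 2\<close> by linarith
  then have "\<not> inj_on ?N (-{0})"
    using card_image by fastforce
  then obtain x y :: 'a where "x \<noteq> 0" "y \<noteq> 0" "x \<noteq> y" "?N x = ?N y"
    unfolding inj_on_def by auto
  then show ?thesis
    by (intro exI[of _ "x / y"]) (simp add: power_divide)
qed

lemma exists_distinct_norm_eq_minus_1:
  assumes card: "CARD('a::{finite,field}) = r ^ 2" and r: "r = CHAR('a) ^ e"
  shows "\<exists>a b::'a. a \<noteq> b \<and> a ^ (r + 1) = -1 \<and> b ^ (r + 1) = -1"
proof -
  have "r \<ge> 2"
  proof (rule ccontr)
    assume "\<not> r \<ge> 2"
    then have "r ^ 2 \<le> 1"
      using power_mono[of r 1 2] by simp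
    then show False
      using two_le_card_field[where 'a='a] card by linarith
  qed
  have "(-1::'a) \<in> (\<lambda>x. x ^ (r + 1)) ` (-{0})"
    unfolding norm_image_eq[OF card \<open>r \<ge> 2\<close>] using minus_one_power_pred_eq_1[OF r] by simp
  then obtain a :: 'a where "a \<noteq> 0" "a ^ (r + 1) = -1"
    by (metis ComplD imageE singletonI)
  obtain z :: 'a where "z \<noteq> 1" "z ^ (r + 1) = 1"
    using exists_nontrivial_norm_eq_1[OF card \<open>r \<ge> 2\<close>] by blast
  have "a \<noteq> a * z"
    using \<open>a \<noteq> 0\<close> \<open>z \<noteq> 1\<close> by simp
  moreover have "(a * z) ^ (r + 1) = -1"
    by (simp only: power_mult_distrib \<open>a ^ (r + 1) = -1\<close> \<open>z ^ (r + 1) = 1\<close> mult_1_right)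
  ultimately show ?thesis
    using \<open>a ^ (r + 1) = -1\<close> by blast
qed

definition vec_concat :: "nat \<Rightarrow> (nat \<Rightarrow> 'a::zero) \<Rightarrow> (nat \<Rightarrow> 'a) \<Rightarrow> nat \<Rightarrow> 'a" where
  "vec_concat n u v = (\<lambda>y. if y < n then u y else if y < 2 * n then v (y - n) else 0)"

definition matrix2 :: "'a \<Rightarrow> 'a \<Rightarrow> 'a \<Rightarrow> 'a \<Rightarrow> nat \<Rightarrow> nat \<Rightarrow> 'a" where
  "matrix2 a00 a01 a10 a11 =
     (\<lambda>i j. if i = 0 then (if j = 0 then a00 else a01) else (if j = 0 then a10 else a11))"

definition mp_word :: "nat \<Rightarrow> 'a \<Rightarrow> 'a \<Rightarrow> (nat \<Rightarrow> 'a::field) \<Rightarrow> (nat \<Rightarrow> 'a) \<Rightarrow> nat \<Rightarrow> 'a" where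
  "mp_word n a b u v = vec_concat n (\<lambda>x. u x + v x) (\<lambda>x. a * u x + b * v x)"

lemma vec_concat_in_vecs: "vec_concat n u v \<in> vecs (2 * n)"
  by (simp add: vec_concat_def vecs_def)

lemma mp_code_matrix2:
  fixes C :: "nat \<Rightarrow> (nat \<Rightarrow> 'a::field) set"
  shows "mp_code 2 2 n C (matrix2 a00 a01 a10 a11) =
     {vec_concat n (\<lambda>x. a00 * c0 x + a10 * c1 x) (\<lambda>x. a01 * c0 x + a11 * c1 x) | c0 c1.
        c0 \<in> C 0 \<and> c1 \<in> C 1}" (is "_ = ?words")
proof -
  have block_eq: "(\<lambda>x. if x < 2 * n then \<Sum>i<2. matrix2 a00 a01 a10 a11 i (x div n) * c i (x mod n) else 0)
      = vec_concat n (\<lambda>x. a00 * c 0 x + a10 * c 1 x) (\<lambda>x. a01 * c 0 x + a11 * c 1 x)" for c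
  proof
    fix x
    show "(if x < 2 * n then \<Sum>i<2. matrix2 a00 a01 a10 a11 i (x div n) * c i (x mod n) else 0)
        = vec_concat n (\<lambda>x. a00 * c 0 x + a10 * c 1 x) (\<lambda>x. a01 * c 0 x + a11 * c 1 x) x"
    proof (cases "x < n")
      case False
      then have "x < 2 * n \<Longrightarrow> x div n = 1 \<and> x mod n = x - n"
        by (simp add: div_if mod_if le_div_geq)
      with False show ?thesis
        by (simp add: vec_concat_def matrix2_def numeral_2_eq_2)
    qed (simp add: vec_concat_def matrix2_def numeral_2_eq_2)
  qed
  show ?thesis
  proof (intro equalityI subsetI)
    fix w assume "w \<in> mp_code 2 2 n C (matrix2 a00 a01 a10 a11)"
    then obtain c where c: "\<forall>i<2. c i \<in> C i"
      and "w = vec_concat n (\<lambda>x. a00 * c 0 x + a10 * c 1 x) (\<lambda>x. a01 * c 0 x + a11 * c 1 x)"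
      unfolding mp_code_def block_eq by blast
    moreover have "c 0 \<in> C 0" "c 1 \<in> C 1"
      using c by simp_all
    ultimately show "w \<in> ?words"
      by blast
  next
    fix w assume "w \<in> ?words"
    then obtain c0 c1 where c: "c0 \<in> C 0" "c1 \<in> C 1"
      and w: "w = vec_concat n (\<lambda>x. a00 * c0 x + a10 * c1 x) (\<lambda>x. a01 * c0 x + a11 * c1 x)"
      by blast
    let ?c = "\<lambda>i. if i = 0 then c0 else c1"
    show "w \<in> mp_code 2 2 n C (matrix2 a00 a01 a10 a11)"
      unfolding mp_code_def mem_Collect_eq
      using block_eq[of ?c] c by (intro exI[of _ ?c]) (simp add: w less_2_cases_iff)
  qed
qed

lemma mp_code_matrix2_eq_mp_words:
  "mp_code 2 2 n C (matrix2 1 a 1 b) = {mp_word n a b u v | u v. u \<in> C 0 \<and> v \<in> C 1}"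
  by (simp add: mp_code_matrix2 mp_word_def)

lemma vecs_eq_0_iff:
  assumes "v \<in> vecs n"
  shows "v = 0 \<longleftrightarrow> (\<forall>x<n. v x = 0)"
proof
  assume "\<forall>x<n. v x = 0"
  then have "v x = 0" for x
    using assms by (cases "x < n") (simp_all add: vecs_def)
  then show "v = 0"
    by (simp add: fun_eq_iff)
qed simp

lemma hamming_weight_eq_0_iff:
  assumes "v \<in> vecs n"
  shows "hamming_weight n v = 0 \<longleftrightarrow> v = 0"
proof -
  have "finite {x. x < n \<and> v x \<noteq> 0}"
    by simp
  then show ?thesis
    unfolding hamming_weight_def vecs_eq_0_iff[OF assms] by auto
qed

lemma lessThan_double: "{..<2 * n} = {..<n} \<union> (\<lambda>x. x + n) ` {..<n::nat}"
  by (simp add: lessThan_atLeast0 mult_2 ivl_disj_un_two)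

lemma sum_lessThan_double:
  fixes n :: nat
  shows "(\<Sum>y<2 * n. g y) = (\<Sum>x<n. g x) + (\<Sum>x<n. g (x + n))"
  by (subst lessThan_double, subst sum.union_disjoint) (auto simp: sum.reindex)

lemma hamming_weight_eq_sum: "hamming_weight n v = (\<Sum>x<n. if v x \<noteq> 0 then 1 else 0)"
proof -
  have "hamming_weight n v = (\<Sum>x\<in>{x \<in> {..<n}. v x \<noteq> 0}. 1)"
    by (simp add: hamming_weight_def)
  also have "\<dots> = (\<Sum>x<n. if v x \<noteq> 0 then 1 else 0)"
    by (rule sum.inter_filter) simp
  finally show ?thesis .
qed

lemma hamming_weight_vec_concat:
  "hamming_weight (2 * n) (vec_concat n u v) = hamming_weight n u + hamming_weight n v"
  unfolding hamming_weight_eq_sum sum_lessThan_double by (simp add: vec_concat_def)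

lemma hamming_weight_le_mp_word:
  assumes "a \<noteq> b"
  shows "hamming_weight n v \<le> hamming_weight (2 * n) (mp_word n a b u v)"
proof -
  have "{x. x < n \<and> v x \<noteq> 0} \<subseteq> {x. x < n \<and> u x + v x \<noteq> 0} \<union> {x. x < n \<and> a * u x + b * v x \<noteq> 0}"
  proof
    fix x assume "x \<in> {x. x < n \<and> v x \<noteq> 0}"
    moreover have "(b - a) * v x = (a * u x + b * v x) - a * (u x + v x)"
      by (simp add: algebra_simps)
    ultimately show "x \<in> {x. x < n \<and> u x + v x \<noteq> 0} \<union> {x. x < n \<and> a * u x + b * v x \<noteq> 0}"
      using assms by auto
  qed
  then have "hamming_weight n v \<le> card ({x. x < n \<and> u x + v x \<noteq> 0} \<union> {x. x < n \<and> a * u x + b * v x \<noteq> 0})"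
    unfolding hamming_weight_def by (intro card_mono) simp_all
  also have "\<dots> \<le> hamming_weight (2 * n) (mp_word n a b u v)"
    unfolding mp_word_def hamming_weight_vec_concat by (simp add: hamming_weight_def card_Un_le)
  finally show ?thesis .
qed

lemma mp_word_eq_0D:
  assumes "mp_word n a b u v = 0" "a \<noteq> b" "u \<in> vecs n" "v \<in> vecs n"
  shows "u = 0 \<and> v = 0"
proof -
  have "hamming_weight n v = 0"
    using hamming_weight_le_mp_word[OF \<open>a \<noteq> b\<close>, of n v u] assms(1) by (simp add: hamming_weight_def)
  then have "v = 0"
    using assms(4) hamming_weight_eq_0_iff by blast
  moreover have "u x = 0" if "x < n" for x
    using fun_cong[OF assms(1), of x] \<open>v = 0\<close> that by (simp add: mp_word_def vec_concat_def)
  then have "u = 0"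
    using assms(3) vecs_eq_0_iff by blast
  ultimately show ?thesis
    by simp
qed

lemma hamming_weight_mp_code_matrix2_ge:
  fixes C :: "nat \<Rightarrow> (nat \<Rightarrow> 'a::field) set"
  assumes "a \<noteq> 0" "a \<noteq> b"
    and weight0: "\<And>c. c \<in> C 0 \<Longrightarrow> c \<noteq> 0 \<Longrightarrow> d0 \<le> hamming_weight n c"
    and weight1: "\<And>c. c \<in> C 1 \<Longrightarrow> c \<noteq> 0 \<Longrightarrow> d1 \<le> hamming_weight n c"
    and w: "w \<in> mp_code 2 2 n C (matrix2 1 a 1 b)" "w \<noteq> 0"
  shows "min (2 * d0) d1 \<le> hamming_weight (2 * n) w"
proof -
  obtain u v where uv: "u \<in> C 0" "v \<in> C 1" and w_eq: "w = mp_word n a b u v"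
    using w(1) unfolding mp_code_matrix2_eq_mp_words by blast
  show ?thesis
  proof (cases "v = 0")
    case True
    then have "w = vec_concat n u (\<lambda>x. a * u x)"
      by (simp add: w_eq mp_word_def)
    moreover have "u \<noteq> 0"
      using w(2) True by (auto simp: w_eq mp_word_def vec_concat_def fun_eq_iff split: if_splits)
    moreover have "hamming_weight n (\<lambda>x. a * u x) = hamming_weight n u"
      using \<open>a \<noteq> 0\<close> by (simp add: hamming_weight_def)
    ultimately have "2 * d0 \<le> hamming_weight (2 * n) w"
      using weight0[OF uv(1)] by (simp add: hamming_weight_vec_concat)
    then show ?thesis
      by simp
  next
    case False
    then have "d1 \<le> hamming_weight (2 * n) w"
      using weight1[OF uv(2)] hamming_weight_le_mp_word[OF \<open>a \<noteq> b\<close>] w_eq le_trans by blast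
    then show ?thesis
      by simp
  qed
qed

lemma zero_power_if_additive:
  assumes "\<And>x y::'a::comm_ring_1. (x + y) ^ r = x ^ r + y ^ r"
  shows "(0::'a) ^ r = 0"
  using assms[of 0 0] by (simp only: add_0_right add_cancel_right_right)

lemma power_sum_additive:
  fixes f :: "'b \<Rightarrow> 'a::comm_ring_1"
  assumes frob_add: "\<And>x y::'a. (x + y) ^ r = x ^ r + y ^ r"
  shows "(\<Sum>i\<in>A. f i) ^ r = (\<Sum>i\<in>A. f i ^ r)"
  using zero_power_if_additive[OF frob_add]
  by (induction A rule: infinite_finite_induct) (simp_all add: frob_add)

lemma herm_inner_swap:
  fixes u v :: "nat \<Rightarrow> 'a::field"
  assumes frob_add: "\<And>x y::'a. (x + y) ^ r = x ^ r + y ^ r"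
    and frob_inv: "\<And>x::'a. (x ^ r) ^ r = x"
  shows "herm_inner r n v u = herm_inner r n u v ^ r"
  unfolding herm_inner_def power_sum_additive[OF frob_add]
  by (simp add: power_mult_distrib frob_inv mult.commute)

lemma herm_inner_vec_concat:
  "herm_inner r (2 * n) (vec_concat n u v) (vec_concat n u' v') = herm_inner r n u u' + herm_inner r n v v'"
  unfolding herm_inner_def sum_lessThan_double by (simp add: vec_concat_def)

lemma herm_inner_mp_word:
  fixes u v u' v' :: "nat \<Rightarrow> 'a::field"
  assumes frob_add: "\<And>x y::'a. (x + y) ^ r = x ^ r + y ^ r"
    and a: "a ^ (r + 1) = -1" and b: "b ^ (r + 1) = -1"
  shows "herm_inner r (2 * n) (mp_word n a b u v) (mp_word n a b u' v')
       = (1 + a * b ^ r) * herm_inner r n u v' + (1 + b * a ^ r) * herm_inner r n v u'"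
proof -
  have pointwise: "(U + V) * (U' + V') ^ r + (a * U + b * V) * (a * U' + b * V') ^ r
      = (1 + a * b ^ r) * (U * V' ^ r) + (1 + b * a ^ r) * (V * U' ^ r)" for U V U' V' :: 'a
  proof -
    have "(U + V) * (U' + V') ^ r + (a * U + b * V) * (a * U' + b * V') ^ r
        = (1 + a * b ^ r) * (U * V' ^ r) + (1 + b * a ^ r) * (V * U' ^ r)
          + (1 + a ^ (r + 1)) * (U * U' ^ r) + (1 + b ^ (r + 1)) * (V * V' ^ r)"
      by (simp add: frob_add algebra_simps)
    moreover have "a * a ^ r = -1" "b * b ^ r = -1"
      using a b by simp_all
    ultimately show ?thesis
      by simp
  qed
  show ?thesis
    unfolding mp_word_def herm_inner_vec_concat unfolding herm_inner_def
    by (simp add: pointwise sum.distrib sum_distrib_left flip: sum.distrib)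
qed

lemma herm_self_orth_mp_code_matrix2:
  fixes C :: "nat \<Rightarrow> (nat \<Rightarrow> 'a::field) set"
  assumes frob_add: "\<And>x y::'a. (x + y) ^ r = x ^ r + y ^ r"
    and frob_inv: "\<And>x::'a. (x ^ r) ^ r = x"
    and a: "a ^ (r + 1) = -1" and b: "b ^ (r + 1) = -1"
    and orth: "\<And>u v. u \<in> C 0 \<Longrightarrow> v \<in> C 1 \<Longrightarrow> herm_inner r n u v = 0"
  shows "herm_self_orth r (2 * n) (mp_code 2 2 n C (matrix2 1 a 1 b))"
proof -
  have "herm_inner r n v u = 0" if "u \<in> C 0" "v \<in> C 1" for u v
    using herm_inner_swap[OF frob_add frob_inv] orth[OF that] zero_power_if_additive[OF frob_add]
    by metis
  with orth show ?thesis
    unfolding herm_self_orth_def mp_code_matrix2_eq_mp_words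
    by (auto simp: herm_inner_mp_word[OF frob_add a b])
qed

lemma sum_fun_apply: "(\<Sum>j\<in>A. f j) x = (\<Sum>j\<in>A. f j x)"
  by (induction A rule: infinite_finite_induct) simp_all

lemma linear_fscaleI:
  fixes f :: "(nat \<Rightarrow> 'a::field) \<Rightarrow> nat \<Rightarrow> 'a"
  assumes "\<And>x y. f (x + y) = f x + f y" and "\<And>c x. f (fscale c x) = fscale c (f x)"
  shows "Vector_Spaces.linear fscale fscale f"
  using assms by (simp add: Vector_Spaces.linear_iff fvs.vector_space_axioms)

lemma dim_range_linear:
  fixes \<Phi> :: "(nat \<Rightarrow> 'a::field) \<Rightarrow> nat \<Rightarrow> 'a"
  assumes lin: "Vector_Spaces.linear fscale fscale \<Phi>"
    and restrict: "\<And>\<beta>. \<Phi> \<beta> = \<Phi> (\<lambda>j. if j < t then \<beta> j else 0)"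
    and kernel: "\<And>\<beta> j. \<Phi> \<beta> = 0 \<Longrightarrow> j < t \<Longrightarrow> \<beta> j = 0"
  shows "fvs.dim (range \<Phi>) = t"
proof -
  interpret lin: Vector_Spaces.linear fscale fscale \<Phi>
    by (rule lin)
  define e :: "nat \<Rightarrow> nat \<Rightarrow> 'a" where "e j = (\<lambda>i. if i = j then 1 else 0)" for j
  define B where "B = (\<lambda>j. \<Phi> (e j)) ` {..<t}"
  have sum_e: "(\<Sum>j<t. fscale (c j) (e j)) i = (if i < t then c i else 0)" for c i
    by (simp add: sum_fun_apply e_def fscale_def if_distrib cong: if_cong)
  have expansion: "\<Phi> \<beta> = (\<Sum>j<t. fscale (\<beta> j) (\<Phi> (e j)))" for \<beta>
  proof -
    have "(\<lambda>j. if j < t then \<beta> j else 0) = (\<Sum>j<t. fscale (\<beta> j) (e j))"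
      by (simp add: sum_e fun_eq_iff)
    then have "\<Phi> \<beta> = \<Phi> (\<Sum>j<t. fscale (\<beta> j) (e j))"
      using restrict by metis
    then show ?thesis
      by (simp add: lin.sum lin.scale)
  qed
  have coeffs_zero: "c i = 0" if "(\<Sum>j<t. fscale (c j) (\<Phi> (e j))) = 0" "i < t" for c i
    using kernel[of "\<Sum>j<t. fscale (c j) (e j)" i] that by (simp add: lin.sum lin.scale sum_e)
  have inj: "inj_on (\<lambda>j. \<Phi> (e j)) {..<t}"
  proof (rule inj_onI)
    fix i j assume "i \<in> {..<t}" "j \<in> {..<t}" "\<Phi> (e i) = \<Phi> (e j)"
    then have "\<Phi> (e i - e j) = 0"
      by (metis lin.diff diff_self)
    then have "(e i - e j) i = 0"
      using kernel \<open>i \<in> {..<t}\<close> by blast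
    then show "i = j"
      by (auto simp: e_def split: if_splits)
  qed
  have "B \<subseteq> range \<Phi>"
    by (auto simp: B_def)
  moreover have "range \<Phi> \<subseteq> fvs.span B"
  proof
    fix w assume "w \<in> range \<Phi>"
    then obtain \<beta> where w: "w = \<Phi> \<beta>"
      by blast
    have "fscale (\<beta> j) (\<Phi> (e j)) \<in> fvs.span B" if "j \<in> {..<t}" for j
      using that by (intro fvs.span_scale fvs.span_base) (simp add: B_def)
    then show "w \<in> fvs.span B"
      unfolding w expansion[of \<beta>] by (rule fvs.span_sum)
  qed
  moreover have "fvs.independent B"
  proof (rule fvs.independent_if_scalars_zero)
    fix f x assume sum_0: "(\<Sum>x\<in>B. fscale (f x) x) = 0" and "x \<in> B"
    then obtain i where "i < t" "x = \<Phi> (e i)"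
      by (auto simp: B_def)
    have "(\<Sum>j<t. fscale (f (\<Phi> (e j))) (\<Phi> (e j))) = 0"
      using sum_0 by (simp add: B_def sum.reindex[OF inj])
    then show "f x = 0"
      using coeffs_zero[of "\<lambda>j. f (\<Phi> (e j))" i] \<open>i < t\<close> \<open>x = \<Phi> (e i)\<close> by simp
  qed (simp add: B_def)
  moreover have "card B = t"
    by (simp add: B_def card_image[OF inj])
  ultimately show ?thesis
    by (rule fvs.dim_unique)
qed

lemma coeff_sum_monom: "coeff (\<Sum>j<k. monom (c j) j) i = (if i < k then c i else 0)"
  by (simp add: coeff_sum)

lemma degree_sum_monom_less:
  assumes "(\<Sum>j<k. monom (c j) j) \<noteq> 0"
  shows "degree (\<Sum>j<k. monom (c j) j) < k"
proof -
  have "k \<noteq> 0"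
    using assms by (cases k) simp_all
  moreover have "degree (\<Sum>j<k. monom (c j) j) \<le> k - 1"
    by (rule degree_le) (auto simp: coeff_sum_monom)
  ultimately show ?thesis
    by linarith
qed

lemma card_nonroots_ge:
  fixes f :: "'a::idom poly"
  assumes "inj_on P {..<n}" "f \<noteq> 0"
  shows "n - degree f \<le> card {x. x < n \<and> poly f (P x) \<noteq> 0}"
proof -
  let ?roots = "{x. x < n \<and> poly f (P x) = 0}"
  have "card ?roots = card (P ` ?roots)"
    by (rule card_image[symmetric]) (rule inj_on_subset[OF assms(1)], auto)
  also have "\<dots> \<le> card {y. poly f y = 0}"
    by (rule card_mono) (auto simp: poly_roots_finite assms(2))
  also have "\<dots> \<le> degree f"
    by (rule card_poly_roots_bound[OF assms(2)])
  finally have "card ?roots \<le> degree f" .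
  moreover have "{x. x < n \<and> poly f (P x) \<noteq> 0} = {..<n} - ?roots"
    by auto
  moreover have "card ({..<n} - ?roots) = n - card ?roots"
    by (subst card_Diff_subset) auto
  ultimately show ?thesis
    by simp
qed

locale hermitian_mp_construction =
  fixes r n k t :: nat and P :: "nat \<Rightarrow> 'a::{finite,field}" and Z :: "'a poly" and a b :: 'a
  assumes inj_P: "inj_on P {..<n}"
    and Z_nonzero: "\<And>x. x < n \<Longrightarrow> poly Z (P x) \<noteq> 0"
    and Z_vanishes: "\<And>y. y \<notin> P ` {..<n} \<Longrightarrow> poly Z y = 0"
    and degree_Z: "degree Z + n \<le> CARD('a)"
    and dims: "k + t \<le> n"
    and frob_add: "\<And>x y::'a. (x + y) ^ r = x ^ r + y ^ r"
    and frob_inv: "\<And>x::'a. (x ^ r) ^ r = x"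
    and norm_a: "a ^ (r + 1) = -1" and norm_b: "b ^ (r + 1) = -1" and a_ne_b: "a \<noteq> b"
begin

definition rs_poly :: "(nat \<Rightarrow> 'a) \<Rightarrow> 'a poly" where
  "rs_poly \<beta> = (\<Sum>j<k. monom (\<beta> j) j)"

definition rs_word :: "(nat \<Rightarrow> 'a) \<Rightarrow> nat \<Rightarrow> 'a" where
  "rs_word \<beta> = (\<lambda>x. if x < n then \<Sum>j<k. \<beta> j * P x ^ j else 0)"

text \<open>The second component code consists of the conjugates of the evaluations of the
  polynomials \<open>g * Z\<close> with \<open>degree g < t\<close>.  Conjugating the coefficients of \<open>g\<close> makes
  the codeword depend linearly on \<open>\<beta>\<close>.\<close>

definition dual_poly :: "(nat \<Rightarrow> 'a) \<Rightarrow> 'a poly" where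
  "dual_poly \<beta> = (\<Sum>j<t. monom (\<beta> j ^ r) j)"

definition dual_word :: "(nat \<Rightarrow> 'a) \<Rightarrow> nat \<Rightarrow> 'a" where
  "dual_word \<beta> = (\<lambda>x. if x < n then \<Sum>j<t. \<beta> j * (P x ^ j * poly Z (P x)) ^ r else 0)"

definition component_code :: "nat \<Rightarrow> (nat \<Rightarrow> 'a) set" where
  "component_code i = (if i = 0 then range rs_word else range dual_word)"

abbreviation product_code :: "(nat \<Rightarrow> 'a) set" where
  "product_code \<equiv> mp_code 2 2 n component_code (matrix2 1 a 1 b)"

definition codeword :: "(nat \<Rightarrow> 'a) \<Rightarrow> nat \<Rightarrow> 'a" where
  "codeword \<beta> = mp_word n a b (rs_word \<beta>) (dual_word (\<lambda>j. \<beta> (k + j)))"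

lemma r_nonzero: "r \<noteq> 0"
  using zero_power_if_additive[OF frob_add] by (cases r) simp_all

lemma rs_word_poly: "rs_word \<beta> x = (if x < n then poly (rs_poly \<beta>) (P x) else 0)"
  by (simp add: rs_word_def rs_poly_def poly_sum poly_monom mult.commute)

lemma dual_word_poly: "dual_word \<beta> x = (if x < n then (poly (dual_poly \<beta>) (P x) * poly Z (P x)) ^ r else 0)"
  by (simp add: dual_word_def dual_poly_def poly_sum poly_monom sum_distrib_right
      power_sum_additive[OF frob_add] power_mult_distrib frob_inv mult.assoc)

lemma rs_word_in_vecs: "rs_word \<beta> \<in> vecs n"
  by (simp add: rs_word_def vecs_def)

lemma dual_word_in_vecs: "dual_word \<beta> \<in> vecs n"
  by (simp add: dual_word_def vecs_def)

lemma rs_word_add: "rs_word (\<lambda>j. \<beta> j + \<gamma> j) x = rs_word \<beta> x + rs_word \<gamma> x"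
  by (simp add: rs_word_def sum.distrib distrib_right)

lemma rs_word_scale: "rs_word (\<lambda>j. c * \<beta> j) x = c * rs_word \<beta> x"
  by (simp add: rs_word_def sum_distrib_left mult.assoc)

lemma dual_word_add: "dual_word (\<lambda>j. \<beta> j + \<gamma> j) x = dual_word \<beta> x + dual_word \<gamma> x"
  by (simp add: dual_word_def sum.distrib distrib_right)

lemma dual_word_scale: "dual_word (\<lambda>j. c * \<beta> j) x = c * dual_word \<beta> x"
  by (simp add: dual_word_def sum_distrib_left mult.assoc)

lemma linear_rs_word: "Vector_Spaces.linear fscale fscale rs_word"
  by (rule linear_fscaleI) (simp_all add: plus_fun_def fscale_def fun_eq_iff rs_word_add rs_word_scale)

lemma linear_dual_word: "Vector_Spaces.linear fscale fscale dual_word"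
  by (rule linear_fscaleI) (simp_all add: plus_fun_def fscale_def fun_eq_iff dual_word_add dual_word_scale)

lemma hamming_weight_rs_word_ge:
  assumes "rs_poly \<beta> \<noteq> 0"
  shows "n - k + 1 \<le> hamming_weight n (rs_word \<beta>)"
proof -
  have "degree (rs_poly \<beta>) < k"
    using assms unfolding rs_poly_def by (rule degree_sum_monom_less)
  then have "n - k + 1 \<le> n - degree (rs_poly \<beta>)"
    using dims by linarith
  also have "\<dots> \<le> card {x. x < n \<and> poly (rs_poly \<beta>) (P x) \<noteq> 0}"
    by (rule card_nonroots_ge[OF inj_P assms])
  also have "\<dots> = hamming_weight n (rs_word \<beta>)"
    unfolding hamming_weight_def rs_word_poly by (rule arg_cong[where f = card]) auto
  finally show ?thesis .
qed

lemma hamming_weight_dual_word_ge: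
  assumes "dual_poly \<beta> \<noteq> 0"
  shows "n - t + 1 \<le> hamming_weight n (dual_word \<beta>)"
proof -
  have "degree (dual_poly \<beta>) < t"
    using assms unfolding dual_poly_def by (rule degree_sum_monom_less)
  then have "n - t + 1 \<le> n - degree (dual_poly \<beta>)"
    using dims by linarith
  also have "\<dots> \<le> card {x. x < n \<and> poly (dual_poly \<beta>) (P x) \<noteq> 0}"
    by (rule card_nonroots_ge[OF inj_P assms])
  also have "\<dots> = hamming_weight n (dual_word \<beta>)"
    unfolding hamming_weight_def dual_word_poly
    by (rule arg_cong[where f = card]) (auto simp: r_nonzero Z_nonzero)
  finally show ?thesis .
qed

lemma rs_word_eq_0_iff: "rs_word \<beta> = 0 \<longleftrightarrow> rs_poly \<beta> = 0"
proof
  assume "rs_word \<beta> = 0"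
  then have "hamming_weight n (rs_word \<beta>) = 0"
    using hamming_weight_eq_0_iff[OF rs_word_in_vecs] by blast
  then show "rs_poly \<beta> = 0"
    using hamming_weight_rs_word_ge by fastforce
qed (simp add: rs_word_poly fun_eq_iff)

lemma dual_word_eq_0_iff: "dual_word \<beta> = 0 \<longleftrightarrow> dual_poly \<beta> = 0"
proof
  assume "dual_word \<beta> = 0"
  then have "hamming_weight n (dual_word \<beta>) = 0"
    using hamming_weight_eq_0_iff[OF dual_word_in_vecs] by blast
  then show "dual_poly \<beta> = 0"
    using hamming_weight_dual_word_ge by fastforce
qed (simp add: dual_word_poly fun_eq_iff zero_power_if_additive[OF frob_add])

lemma herm_inner_rs_dual: "herm_inner r n (rs_word \<beta>) (dual_word \<gamma>) = 0"
proof -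
  let ?h = "rs_poly \<beta> * dual_poly \<gamma> * Z"
  have "herm_inner r n (rs_word \<beta>) (dual_word \<gamma>) = (\<Sum>x<n. poly ?h (P x))"
    by (simp add: herm_inner_def rs_word_poly dual_word_poly frob_inv mult.assoc)
  also have "\<dots> = (\<Sum>y\<in>P ` {..<n}. poly ?h y)"
    by (simp add: sum.reindex[OF inj_P])
  also have "\<dots> = (\<Sum>y\<in>UNIV. poly ?h y)"
    by (rule sum.mono_neutral_left) (auto simp: Z_vanishes)
  also have "\<dots> = 0"
  proof (cases "rs_poly \<beta> = 0 \<or> dual_poly \<gamma> = 0")
    case False
    then have "degree (rs_poly \<beta>) < k" "degree (dual_poly \<gamma>) < t"
      unfolding rs_poly_def dual_poly_def by (auto intro: degree_sum_monom_less)
    then have "degree ?h + 2 \<le> CARD('a)"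
      using degree_mult_le[of "rs_poly \<beta> * dual_poly \<gamma>" Z] degree_mult_le[of "rs_poly \<beta>" "dual_poly \<gamma>"]
        dims degree_Z by linarith
    then show ?thesis
      by (rule sum_UNIV_poly_eq_0)
  qed auto
  finally show ?thesis .
qed

lemma rs_word_cong: "(\<And>j. j < k \<Longrightarrow> \<beta> j = \<beta>' j) \<Longrightarrow> rs_word \<beta> = rs_word \<beta>'"
  by (auto simp: rs_word_def intro!: sum.cong)

lemma dual_word_cong: "(\<And>j. j < t \<Longrightarrow> \<beta> j = \<beta>' j) \<Longrightarrow> dual_word \<beta> = dual_word \<beta>'"
  by (auto simp: dual_word_def intro!: sum.cong)

lemma product_code_eq_range_codeword: "product_code = range codeword"
proof (intro equalityI subsetI)
  fix w assume "w \<in> product_code"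
  then obtain \<beta>0 \<beta>1 where w: "w = mp_word n a b (rs_word \<beta>0) (dual_word \<beta>1)"
    unfolding mp_code_matrix2_eq_mp_words component_code_def by auto
  define \<beta> where "\<beta> j = (if j < k then \<beta>0 j else \<beta>1 (j - k))" for j
  have "rs_word \<beta> = rs_word \<beta>0"
    by (rule rs_word_cong) (simp add: \<beta>_def)
  moreover have "dual_word (\<lambda>j. \<beta> (k + j)) = dual_word \<beta>1"
    by (rule dual_word_cong) (simp add: \<beta>_def)
  ultimately have "w = codeword \<beta>"
    by (simp only: w codeword_def)
  then show "w \<in> range codeword"
    by blast
next
  fix w assume "w \<in> range codeword"
  then obtain \<beta> where "w = codeword \<beta>"
    by blast
  moreover have "rs_word \<beta> \<in> component_code 0" "dual_word (\<lambda>j. \<beta> (k + j)) \<in> component_code 1"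
    by (simp_all add: component_code_def)
  ultimately show "w \<in> product_code"
    unfolding mp_code_matrix2_eq_mp_words codeword_def by blast
qed

lemma linear_codeword: "Vector_Spaces.linear fscale fscale codeword"
  by (rule linear_fscaleI)
    (simp_all add: codeword_def mp_word_def vec_concat_def plus_fun_def fscale_def fun_eq_iff rs_word_add rs_word_scale
      dual_word_add dual_word_scale algebra_simps)

lemma codeword_restrict: "codeword \<beta> = codeword (\<lambda>j. if j < k + t then \<beta> j else 0)"
proof -
  have "rs_word \<beta> = rs_word (\<lambda>j. if j < k + t then \<beta> j else 0)"
    "dual_word (\<lambda>j. \<beta> (k + j)) = dual_word (\<lambda>j. if k + j < k + t then \<beta> (k + j) else 0)"
    by (simp_all cong: rs_word_cong dual_word_cong)
  then show ?thesis
    by (simp add: codeword_def)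
qed

lemma codeword_eq_0_imp:
  assumes "codeword \<beta> = 0" "j < k + t"
  shows "\<beta> j = 0"
proof -
  have "rs_word \<beta> = 0 \<and> dual_word (\<lambda>j. \<beta> (k + j)) = 0"
    using mp_word_eq_0D[OF _ a_ne_b rs_word_in_vecs dual_word_in_vecs] assms(1)
    unfolding codeword_def by blast
  then have "rs_poly \<beta> = 0" "dual_poly (\<lambda>j. \<beta> (k + j)) = 0"
    by (simp_all add: rs_word_eq_0_iff dual_word_eq_0_iff)
  then have "coeff (rs_poly \<beta>) j = 0" "coeff (dual_poly (\<lambda>j. \<beta> (k + j))) (j - k) = 0"
    by simp_all
  then show ?thesis
    using assms(2) r_nonzero by (auto simp: rs_poly_def dual_poly_def coeff_sum_monom split: if_splits)
qed

lemma linear_code_component: "linear_code n (component_code i)"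
proof -
  interpret rs: Vector_Spaces.linear fscale fscale rs_word
    by (rule linear_rs_word)
  interpret dual: Vector_Spaces.linear fscale fscale dual_word
    by (rule linear_dual_word)
  show ?thesis
    using rs.subspace_image[OF fvs.subspace_UNIV] dual.subspace_image[OF fvs.subspace_UNIV]
      rs_word_in_vecs dual_word_in_vecs
    by (auto simp: linear_code_def component_code_def)
qed

lemma linear_code_product_code: "linear_code (2 * n) product_code"
proof -
  interpret cw: Vector_Spaces.linear fscale fscale codeword
    by (rule linear_codeword)
  show ?thesis
    using cw.subspace_image[OF fvs.subspace_UNIV]
    by (auto simp: linear_code_def product_code_eq_range_codeword codeword_def mp_word_def
        vec_concat_in_vecs)
qed

lemma code_dim_product_code: "code_dim product_code = k + t"
  unfolding code_dim_def product_code_eq_range_codeword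
  using linear_codeword codeword_restrict codeword_eq_0_imp by (rule dim_range_linear)

lemma hamming_weight_product_code_ge:
  assumes "w \<in> product_code" "w \<noteq> 0"
  shows "min (2 * (n - k + 1)) (n - t + 1) \<le> hamming_weight (2 * n) w"
proof (rule hamming_weight_mp_code_matrix2_ge[OF _ a_ne_b _ _ assms])
  show "a \<noteq> 0"
    using norm_a by auto
  show "n - k + 1 \<le> hamming_weight n c" if "c \<in> component_code 0" "c \<noteq> 0" for c
    using that hamming_weight_rs_word_ge rs_word_eq_0_iff by (auto simp: component_code_def)
  show "n - t + 1 \<le> hamming_weight n c" if "c \<in> component_code 1" "c \<noteq> 0" for c
    using that hamming_weight_dual_word_ge dual_word_eq_0_iff by (auto simp: component_code_def)
qed

lemma herm_self_orth_product_code: "herm_self_orth r (2 * n) product_code"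
  using frob_add frob_inv norm_a norm_b
  by (rule herm_self_orth_mp_code_matrix2) (auto simp: component_code_def herm_inner_rs_dual)

end

lemma exists_evaluation_points:
  assumes "n \<le> CARD('a::{finite,field})"
  shows "\<exists>(P :: nat \<Rightarrow> 'a) Z. inj_on P {..<n} \<and> (\<forall>x<n. poly Z (P x) \<noteq> 0)
           \<and> (\<forall>y. y \<notin> P ` {..<n} \<longrightarrow> poly Z y = 0) \<and> degree Z + n \<le> CARD('a)"
proof -
  obtain P :: "nat \<Rightarrow> 'a" where P: "bij_betw P {..<CARD('a)} UNIV"
    using ex_bij_betw_nat_finite[of "UNIV :: 'a set"] by (auto simp: lessThan_atLeast0)
  then have inj: "inj_on P {..<n}"
    using assms by (auto simp: bij_betw_def intro: inj_on_subset)
  define Z where "Z = (\<Prod>y\<in>- P ` {..<n}. [:-y, 1:])"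
  have poly_Z: "poly Z x = (\<Prod>y\<in>- P ` {..<n}. x - y)" for x
    by (simp add: Z_def poly_prod)
  have "degree Z \<le> (\<Sum>y\<in>- P ` {..<n}. degree [:-y, 1::'a:])"
    using degree_prod_sum_le[of "- P ` {..<n}" "\<lambda>y. [:-y, 1::'a:]"] by (simp add: Z_def o_def)
  also have "\<dots> = CARD('a) - n"
    by (simp add: Compl_eq_Diff_UNIV card_Diff_subset card_image[OF inj])
  finally have "degree Z + n \<le> CARD('a)"
    using assms by linarith
  with inj show ?thesis
    by (intro exI[of _ P] exI[of _ Z]) (auto simp: poly_Z)
qed

lemma frobenius_add:
  fixes x y :: "'a::{finite,field}"
  assumes "r = CHAR('a) ^ e"
  shows "(x + y) ^ r = x ^ r + y ^ r"
  using prime_CHAR_finite_field assms by (rule freshmans_dream')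

lemma power_power_eq_self:
  fixes x :: "'a::{finite,field}"
  assumes "CARD('a) = r ^ 2"
  shows "(x ^ r) ^ r = x"
  using power_card_eq_self[of x] assms by (simp add: power2_eq_square flip: power_mult)

theorem corollary5p2:
  fixes r n k i :: nat
  assumes "\<exists>p e. prime (p::nat) \<and> e \<ge> 1 \<and> r = p ^ e"
    and "card (UNIV :: 'a set) = r ^ 2"
    and "k \<le> n" and "n \<le> r ^ 2"
    and "i \<le> n - k"
  shows "\<exists>s l m (C :: nat \<Rightarrow> (nat \<Rightarrow> 'a::{finite,field}) set) (A :: nat \<Rightarrow> nat \<Rightarrow> 'a).
           l * m = 2 * n \<and>
           (\<forall>j<s. linear_code m (C j)) \<and>
           linear_code (2 * n) (mp_code s l m C A) \<and>
           code_dim (mp_code s l m C A) = n - i \<and>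
           (\<forall>v\<in>mp_code s l m C A. v \<noteq> 0 \<longrightarrow>
              hamming_weight (2 * n) v \<ge> min (2 * (n - k + 1)) (k + i + 1)) \<and>
           herm_self_orth r (2 * n) (mp_code s l m C A)"
proof -
  obtain p e where "prime p" "r = p ^ e"
    using assms(1) by blast
  then have r_char: "r = CHAR('a) ^ e"
    using CHAR_eq_prime_of_card[where 'a='a, of p "e * 2"] assms(2) by (simp add: power_mult)
  obtain a b :: 'a where "a \<noteq> b" "a ^ (r + 1) = -1" "b ^ (r + 1) = -1"
    using exists_distinct_norm_eq_minus_1[OF assms(2) r_char] by blast
  obtain P :: "nat \<Rightarrow> 'a" and Z where "inj_on P {..<n}" "\<forall>x<n. poly Z (P x) \<noteq> 0"
    "\<forall>y. y \<notin> P ` {..<n} \<longrightarrow> poly Z y = 0" "degree Z + n \<le> CARD('a)"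
    using exists_evaluation_points assms(2,4) by metis
  then interpret hermitian_mp_construction r n k "n - k - i" P Z a b
    using assms(2-5) frobenius_add[OF r_char] power_power_eq_self[OF assms(2)]
      \<open>a \<noteq> b\<close> \<open>a ^ (r + 1) = -1\<close> \<open>b ^ (r + 1) = -1\<close>
    by unfold_locales auto
  have "k + (n - k - i) = n - i" "n - (n - k - i) + 1 = k + i + 1"
    using assms(3,5) by simp_all
  then show ?thesis
    using linear_code_component linear_code_product_code code_dim_product_code
      hamming_weight_product_code_ge herm_self_orth_product_code
    by (intro exI[of _ 2] exI[of _ n] exI[of _ component_code] exI[of _ "matrix2 1 a 1 b"]) auto
qed

end
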